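(* For any positive integers $m > s$, $f(m,s) \ge 1/3$.
   Context: The muffin problem with $m$ muffins and $s$ students (positive integers) asks to cut each of $m$ muffins of size $1$ into finitely many pieces of positive size and to assign every piece to one of $s$ students so that each student receives pieces of total size $m/s$. $f(m,s)$ denotes the maximum, over all such divisions and assignments, of the size of the smallest piece. *)

theory Defs
  imports Complex_Main
begin

definition muffin_proc :: "nat \<Rightarrow> nat \<Rightarrow> (nat \<times> nat \<times> real) list \<Rightarrow> bool" where
  "muffin_proc m s ps \<longleftrightarrow>
     (\<forall>(i, j, x) \<in> set ps. i < m \<and> j < s \<and> x > 0) \<and>
     (\<forall>i<m. (\<Sum>(i', j, x) \<leftarrow> ps. if i' = i then x else 0) = 1) \<and>
     (\<forall>j<s. (\<Sum>(i, j', x) \<leftarrow> ps. if j' = j then x else 0) = real m / real s)"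

definition min_piece :: "(nat \<times> nat \<times> real) list \<Rightarrow> real" where
  "min_piece ps = Min ((\<lambda>(i, j, x). x) ` set ps)"

definition muffin_f :: "nat \<Rightarrow> nat \<Rightarrow> real" where
  "muffin_f m s = Sup {min_piece ps | ps. muffin_proc m s ps}"

end

theory Submission
  imports Defs
begin

text \<open>Write \<open>m = s + k\<close>. The first \<open>s\<close> muffins form a cycle: muffin \<open>j\<close> gives
  \<open>1 - y\<^sub>j\<close> to student \<open>j\<close> and \<open>y\<^sub>j\<close> to student \<open>j - 1 (mod s)\<close>, where
  \<open>1/3 \<le> y\<^sub>j < 2/3\<close>. The other \<open>k\<close> muffins are cut into \<open>3k\<close> thirds, numbered
  consecutively, and student \<open>j\<close> receives the thirds with number in
  \<open>[\<lfloor>3kj/s\<rfloor>, \<lfloor>3k(j+1)/s\<rfloor>)\<close>. Choosing \<open>y\<^sub>j = 1/3 + (3kj mod s)/(3s)\<close> makes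
  \<open>y\<^sub>j\<^sub>+\<^sub>1 - y\<^sub>j\<close> compensate exactly the rounding error of the floors, so that every
  student receives \<open>1 + k/s\<close>, while every piece has size at least \<open>1/3\<close>.\<close>

definition muffin_total :: "(nat \<times> nat \<times> real) list \<Rightarrow> nat \<Rightarrow> real" where
  "muffin_total ps i = (\<Sum>(i', j, x) \<leftarrow> ps. if i' = i then x else 0)"

definition student_total :: "(nat \<times> nat \<times> real) list \<Rightarrow> nat \<Rightarrow> real" where
  "student_total ps j = (\<Sum>(i, j', x) \<leftarrow> ps. if j' = j then x else 0)"

lemma muffin_proc_iff:
  "muffin_proc m s ps \<longleftrightarrow>
     (\<forall>(i, j, x) \<in> set ps. i < m \<and> j < s \<and> x > 0) \<and>
     (\<forall>i<m. muffin_total ps i = 1) \<and>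
     (\<forall>j<s. student_total ps j = real m / real s)"
  unfolding muffin_proc_def muffin_total_def student_total_def ..

lemma muffin_total_append [simp]:
  "muffin_total (ps @ qs) i = muffin_total ps i + muffin_total qs i"
  by (simp add: muffin_total_def)

lemma student_total_append [simp]:
  "student_total (ps @ qs) j = student_total ps j + student_total qs j"
  by (simp add: student_total_def)

lemma muffin_proc_piece_le_1:
  assumes proc: "muffin_proc m s ps" and piece: "(i, j, x) \<in> set ps"
  shows "x \<le> 1"
proof -
  let ?share = "\<lambda>(i', j::nat, x::real). if i' = i then x else 0"
  have valid: "\<forall>(i, j, x) \<in> set ps. i < m \<and> j < s \<and> x > 0"
    and totals: "\<forall>i<m. muffin_total ps i = 1"
    using proc unfolding muffin_proc_iff by blast+
  have "i < m"
    using valid piece by fast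
  have "x \<in> set (map ?share ps)"
    using imageI[OF piece, of ?share] by simp
  moreover have "0 \<le> y" if "y \<in> set (map ?share ps)" for y
    using valid that by fastforce
  ultimately have "x \<le> muffin_total ps i"
    unfolding muffin_total_def by (rule member_le_sum_list)
  then show ?thesis
    using totals \<open>i < m\<close> by simp
qed

lemma muffin_proc_nonempty:
  assumes "muffin_proc m s ps" and "0 < m"
  shows "ps \<noteq> []"
  using assms unfolding muffin_proc_iff muffin_total_def by auto

lemma le_min_piece:
  assumes "ps \<noteq> []" and "\<And>i j x. (i, j, x) \<in> set ps \<Longrightarrow> c \<le> x"
  shows "c \<le> min_piece ps"
  using assms unfolding min_piece_def by auto

lemma min_piece_le_1:
  assumes "muffin_proc m s ps" and "0 < m"
  shows "min_piece ps \<le> 1"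
proof -
  obtain i j x where piece: "(i, j, x) \<in> set ps"
    using muffin_proc_nonempty[OF assms] by (cases ps) auto
  then have "min_piece ps \<le> x"
    unfolding min_piece_def by (intro Min_le) force+
  also have "x \<le> 1"
    using muffin_proc_piece_le_1[OF assms(1) piece] .
  finally show ?thesis .
qed

lemma min_piece_le_muffin_f:
  assumes "muffin_proc m s ps" and "0 < m"
  shows "min_piece ps \<le> muffin_f m s"
proof -
  have "bdd_above {min_piece ps | ps. muffin_proc m s ps}"
    using min_piece_le_1 \<open>0 < m\<close> unfolding bdd_above_def by blast
  then show ?thesis
    unfolding muffin_f_def by (rule cSup_upper[rotated]) (use assms in blast)
qed

lemma sum_list_map_concat_map:
  "sum_list (map f (concat (map g xs))) = sum_list (map (\<lambda>x. sum_list (map f (g x))) xs)"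
  by (induction xs) auto

lemma sum_rotate_mod:
  assumes "0 < s"
  shows "(\<Sum>j<s. g (Suc j mod s)) = (\<Sum>j<s. g j :: 'a :: comm_monoid_add)"
proof -
  obtain n where n: "s = Suc n" using assms gr0_implies_Suc by blast
  have "(\<Sum>j<Suc n. g (Suc j mod Suc n)) = (\<Sum>j<n. g (Suc j mod Suc n)) + g 0"
    by (simp add: add.commute)
  also have "(\<Sum>j<n. g (Suc j mod Suc n)) = (\<Sum>j<n. g (Suc j))"
    by (rule sum.cong) auto
  also have "(\<Sum>j<n. g (Suc j)) + g 0 = (\<Sum>j<Suc n. g j)"
    by (simp only: sum.lessThan_Suc_shift add.commute)
  finally show ?thesis using n by simp
qed

lemma sum_consecutive_blocks:
  fixes Q :: "nat \<Rightarrow> nat"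
  assumes "mono Q"
  shows "(\<Sum>j<n. \<Sum>p\<in>{Q j..<Q (Suc j)}. f p) = (\<Sum>p\<in>{Q 0..<Q n}. f p :: 'a :: comm_monoid_add)"
proof (induction n)
  case 0
  show ?case by simp
next
  case (Suc n)
  have "Q 0 \<le> Q n" and "Q n \<le> Q (Suc n)"
    using \<open>mono Q\<close> by (simp_all add: monoD)
  then show ?case
    using Suc.IH sum.atLeastLessThan_concat[of "Q 0" "Q n" "Q (Suc n)" f] by simp
qed

definition chain_share :: "nat \<Rightarrow> nat \<Rightarrow> nat \<Rightarrow> real" where
  "chain_share s k j = (real s + real (3 * k * j mod s)) / (3 * real s)"

definition third_index :: "nat \<Rightarrow> nat \<Rightarrow> nat \<Rightarrow> nat" where
  "third_index s k j = 3 * k * j div s"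

definition chain_pieces :: "nat \<Rightarrow> nat \<Rightarrow> (nat \<times> nat \<times> real) list" where
  "chain_pieces s k = concat (map (\<lambda>j.
     [(j, j, 1 - chain_share s k j), (Suc j mod s, j, chain_share s k (Suc j mod s))]) [0..<s])"

definition third_pieces :: "nat \<Rightarrow> nat \<Rightarrow> (nat \<times> nat \<times> real) list" where
  "third_pieces s k = concat (map (\<lambda>j.
     map (\<lambda>p. (s + p div 3, j, 1/3)) [third_index s k j..<third_index s k (Suc j)]) [0..<s])"

definition thirds_division :: "nat \<Rightarrow> nat \<Rightarrow> (nat \<times> nat \<times> real) list" where
  "thirds_division s k = chain_pieces s k @ third_pieces s k"

lemma chain_share_bounds:
  assumes "0 < s"
  shows "1/3 \<le> chain_share s k j" and "chain_share s k j < 2/3"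
proof -
  have "real (3 * k * j mod s) < real s"
    using assms by simp
  then show "1/3 \<le> chain_share s k j" and "chain_share s k j < 2/3"
    using assms unfolding chain_share_def by (simp_all add: field_simps)
qed

lemma chain_share_mod: "chain_share s k (j mod s) = chain_share s k j"
  unfolding chain_share_def by (metis mod_mult_right_eq)

lemma mono_third_index: "mono (third_index s k)"
  unfolding third_index_def by (intro monoI div_le_mono) simp

lemma third_index_0: "third_index s k 0 = 0"
  by (simp add: third_index_def)

lemma third_index_last: "0 < s \<Longrightarrow> third_index s k s = 3 * k"
  by (simp add: third_index_def)

lemma student_share_eq:
  assumes "0 < s"
  shows "1 - chain_share s k j + chain_share s k (Suc j)
           + real (third_index s k (Suc j) - third_index s k j) / 3 = real (s + k) / real s"
proof -
  define r where "r n = real (3 * k * n mod s)" for n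
  define q where "q n = real (third_index s k n)" for n
  have division: "real s * q n + r n = 3 * real k * real n" for n
  proof -
    have "s * third_index s k n + 3 * k * n mod s = 3 * k * n"
      unfolding third_index_def by (rule mult_div_mod_eq)
    then have "real (s * third_index s k n + 3 * k * n mod s) = real (3 * k * n)"
      by (rule arg_cong)
    then show ?thesis
      unfolding q_def r_def by simp
  qed
  have share: "chain_share s k n = (real s + r n) / (3 * real s)" for n
    by (simp add: chain_share_def r_def)
  have "third_index s k j \<le> third_index s k (Suc j)"
    using mono_third_index by (simp add: monoD)
  then have diff: "real (third_index s k (Suc j) - third_index s k j) = q (Suc j) - q j"
    by (simp add: q_def)
  have r_Suc: "r (Suc j) = r j + 3 * real k - real s * (q (Suc j) - q j)"
    using division[of j] division[of "Suc j"] by (simp add: algebra_simps)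
  show ?thesis
    unfolding share diff r_Suc using assms by (simp add: field_simps)
qed

lemma sum_list_map_chain_pieces:
  "sum_list (map F (chain_pieces s k)) =
     (\<Sum>j<s. F (j, j, 1 - chain_share s k j) + F (Suc j mod s, j, chain_share s k (Suc j mod s)))"
  unfolding chain_pieces_def sum_list_map_concat_map interv_sum_list_conv_sum_set_nat
  by (simp add: atLeast0LessThan)

lemma sum_list_map_third_pieces:
  "sum_list (map F (third_pieces s k)) =
     (\<Sum>j<s. \<Sum>p\<in>{third_index s k j..<third_index s k (Suc j)}. F (s + p div 3, j, 1/3))"
  unfolding third_pieces_def sum_list_map_concat_map interv_sum_list_conv_sum_set_nat
  by (simp add: atLeast0LessThan interv_sum_list_conv_sum_set_nat)

lemma thirds_division_piece:
  assumes "0 < s" and "(i, j, x) \<in> set (thirds_division s k)"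
  shows "i < s + k \<and> j < s \<and> 1/3 \<le> x"
proof -
  consider (chain) "j < s" "i = j \<or> i = Suc j mod s"
      "x = 1 - chain_share s k j \<or> x = chain_share s k i"
    | (third) p where "j < s" "third_index s k j \<le> p" "p < third_index s k (Suc j)"
        "i = s + p div 3" "x = 1/3"
    using assms(2) unfolding thirds_division_def chain_pieces_def third_pieces_def by auto
  then show ?thesis
  proof cases
    case chain
    have "Suc j mod s < s + k"
      using \<open>0 < s\<close> mod_less_divisor trans_less_add1 by blast
    moreover have "1/3 \<le> x"
      using chain chain_share_bounds[OF \<open>0 < s\<close>, of k j] chain_share_bounds[OF \<open>0 < s\<close>, of k i]
      by auto
    ultimately show ?thesis
      using chain by auto
  next
    case third
    have "third_index s k (Suc j) \<le> third_index s k s"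
      using \<open>j < s\<close> mono_third_index by (simp add: monoD)
    then show ?thesis
      using third third_index_last[OF \<open>0 < s\<close>] by auto
  qed
qed

lemma muffin_total_chain_pieces:
  assumes "0 < s"
  shows "muffin_total (chain_pieces s k) i = (if i < s then 1 else 0)"
proof -
  let ?share = "\<lambda>i'. if i' = i then chain_share s k i' else 0"
  have "muffin_total (chain_pieces s k) i =
          (\<Sum>j<s. if j = i then 1 - chain_share s k j else 0) + (\<Sum>j<s. ?share (Suc j mod s))"
    unfolding muffin_total_def sum_list_map_chain_pieces by (simp add: sum.distrib)
  also have "(\<Sum>j<s. ?share (Suc j mod s)) = (\<Sum>j<s. ?share j)"
    using sum_rotate_mod[OF assms] .
  finally show ?thesis by simp
qed

lemma muffin_total_third_pieces:
  assumes "0 < s" and "i < s + k"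
  shows "muffin_total (third_pieces s k) i = (if i < s then 0 else 1)"
proof (cases "i < s")
  case True
  then show ?thesis
    unfolding muffin_total_def sum_list_map_third_pieces by simp
next
  case False
  have "muffin_total (third_pieces s k) i =
          (\<Sum>j<s. \<Sum>p\<in>{third_index s k j..<third_index s k (Suc j)}.
             if p div 3 = i - s then 1/3 else 0)"
    unfolding muffin_total_def sum_list_map_third_pieces using False
    by (intro sum.cong refl) auto
  also have "\<dots> = (\<Sum>p\<in>{0..<3 * k}. if p div 3 = i - s then 1/3 else 0)"
    unfolding sum_consecutive_blocks[OF mono_third_index]
    by (simp add: third_index_0 third_index_last[OF assms(1)])
  also have "\<dots> = (\<Sum>p\<in>{p \<in> {0..<3 * k}. p div 3 = i - s}. 1/3)"
    by (rule sum.inter_filter[symmetric]) simp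
  also have "{p \<in> {0..<3 * k}. p div 3 = i - s} = {3 * (i - s)..<3 * (i - s) + 3}"
    using False assms(2) by auto
  finally show ?thesis
    using False by simp
qed

lemma student_total_chain_pieces:
  assumes "j < s"
  shows "student_total (chain_pieces s k) j = 1 - chain_share s k j + chain_share s k (Suc j mod s)"
  unfolding student_total_def sum_list_map_chain_pieces using assms
  by (simp add: if_distrib cong: if_cong)

lemma student_total_third_pieces:
  assumes "j < s"
  shows "student_total (third_pieces s k) j = real (third_index s k (Suc j) - third_index s k j) / 3"
  unfolding student_total_def sum_list_map_third_pieces using assms
  by (simp add: if_distrib sum.delta cong: if_cong)

lemma muffin_proc_thirds_division:
  assumes "0 < s"
  shows "muffin_proc (s + k) s (thirds_division s k)"
  unfolding muffin_proc_iff
proof (intro conjI allI impI)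
  show "\<forall>(i, j, x) \<in> set (thirds_division s k). i < s + k \<and> j < s \<and> x > 0"
    using thirds_division_piece[OF assms] by fastforce
next
  fix i assume "i < s + k"
  then show "muffin_total (thirds_division s k) i = 1"
    using assms by (simp add: thirds_division_def muffin_total_chain_pieces muffin_total_third_pieces)
next
  fix j assume "j < s"
  then show "student_total (thirds_division s k) j = real (s + k) / real s"
    using student_share_eq[OF assms, of k j]
    by (simp add: thirds_division_def student_total_chain_pieces student_total_third_pieces
        chain_share_mod)
qed

theorem lemma8:
  fixes m s :: nat
  assumes "0 < s" and "s < m"
  shows "muffin_f m s \<ge> 1 / 3"
proof -
  obtain k where m: "m = s + k"
    using \<open>s < m\<close> less_imp_add_positive by blast
  have proc: "muffin_proc m s (thirds_division s k)"
    unfolding m using muffin_proc_thirds_division[OF \<open>0 < s\<close>] .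
  have "1/3 \<le> min_piece (thirds_division s k)"
  proof (rule le_min_piece)
    show "thirds_division s k \<noteq> []"
      using muffin_proc_nonempty[OF proc] assms by simp
  qed (use thirds_division_piece[OF \<open>0 < s\<close>] in blast)
  also have "\<dots> \<le> muffin_f m s"
    using min_piece_le_muffin_f[OF proc] assms by simp
  finally show ?thesis .
qed

end
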